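(* Let $L_{7,2}\oplus L_1$ be the eight-dimensional real Lie algebra with basis $X_1,\dots,X_8$ whose only nonzero brackets (for $i<j$, $[X_i,X_j]=\sum_kC_{ij}^kX_k$) are $C_{23}^1=1,C_{12}^3=1,C_{13}^2=-1,C_{14}^7=\tfrac12,C_{15}^6=\tfrac12,C_{16}^5=-\tfrac12,C_{17}^4=-\tfrac12,C_{24}^5=\tfrac12,C_{25}^4=-\tfrac12,C_{26}^7=\tfrac12,C_{27}^6=-\tfrac12,C_{34}^6=\tfrac12,C_{35}^7=-\tfrac12,C_{36}^4=-\tfrac12,C_{37}^5=\tfrac12$ (so $X_8$ is central), and let $L_{7,7}\oplus L_1$ be the eight-dimensional real Lie algebra with basis $X_1,\dots,X_8$ whose only nonzero brackets are $C_{12}^2=2,C_{13}^3=-2,C_{23}^1=1,C_{14}^4=1,C_{15}^5=-1,C_{25}^4=1,C_{27}^6=1,C_{34}^5=1,C_{16}^6=1,C_{17}^7=-1,C_{36}^7=1$ (so $X_8$ is central). Then $L_{7,2}\oplus L_1$ is a contraction of $\mathfrak{su}(3)$ and of $\mathfrak{su}(2,1)$, while $L_{7,7}\oplus L_1$ is a contraction of $\mathfrak{su}(2,1)$ and of $\mathfrak{sl}(3,\mathbb{R})$.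
   Context: All Lie algebras are over $\mathbb{R}$. Unlisted brackets $[X_i,X_j]$, $i<j$, are zero; the others follow by antisymmetry. Contraction: for a Lie algebra $(V,[\cdot,\cdot])$ and nonsingular linear maps $\Phi_t$, $t\in[1,\infty)$, if $[X,Y]_\infty=\lim_{t\to\infty}\Phi_t^{-1}[\Phi_tX,\Phi_tY]$ exists for all $X,Y$, any Lie algebra isomorphic to $(V,[\cdot,\cdot]_\infty)$ is a contraction of $(V,[\cdot,\cdot])$. $\mathfrak{su}(3)$, $\mathfrak{su}(2,1)$, $\mathfrak{sl}(3,\mathbb{R})$ are the real forms of $\mathfrak{sl}(3,\mathbb{C})$. *)

theory Defs
  imports "HOL-Analysis.Analysis"
begin

text \<open>A real Lie algebra is given by a real subspace V of an ambient real vector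
space together with a bracket on V.\<close>

definition lie_iso ::
  "'a::real_vector set \<Rightarrow> ('a \<Rightarrow> 'a \<Rightarrow> 'a) \<Rightarrow> 'b::real_vector set \<Rightarrow> ('b \<Rightarrow> 'b \<Rightarrow> 'b)
     \<Rightarrow> ('a \<Rightarrow> 'b) \<Rightarrow> bool" where
  "lie_iso V br W br' f \<longleftrightarrow> linear f \<and> bij_betw f V W \<and>
     (\<forall>X\<in>V. \<forall>Y\<in>V. f (br X Y) = br' (f X) (f Y))"

definition is_contraction_of ::
  "'b::real_vector set \<Rightarrow> ('b \<Rightarrow> 'b \<Rightarrow> 'b) \<Rightarrow>
   'a::real_normed_vector set \<Rightarrow> ('a \<Rightarrow> 'a \<Rightarrow> 'a) \<Rightarrow> bool" where
  "is_contraction_of W br' V br \<longleftrightarrow>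
     (\<exists>(\<Phi> :: real \<Rightarrow> 'a \<Rightarrow> 'a) (brinf :: 'a \<Rightarrow> 'a \<Rightarrow> 'a).
        (\<forall>t\<ge>1. linear (\<Phi> t) \<and> bij_betw (\<Phi> t) V V) \<and>
        (\<forall>X\<in>V. \<forall>Y\<in>V.
           ((\<lambda>t. inv_into V (\<Phi> t) (br (\<Phi> t X) (\<Phi> t Y))) \<longlongrightarrow> brinf X Y) at_top) \<and>
        (\<exists>f. lie_iso V brinf W br' f))"

definition commutator :: "'a::comm_ring_1^'n^'n \<Rightarrow> 'a^'n^'n \<Rightarrow> 'a^'n^'n" where
  "commutator A B = A ** B - B ** A"

definition mtrace :: "'a::comm_ring_1^'n^'n \<Rightarrow> 'a" where
  "mtrace A = (\<Sum>i\<in>UNIV. A $ i $ i)"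

definition adjoint3 :: "complex^3^3 \<Rightarrow> complex^3^3" where
  "adjoint3 A = (\<chi> i j. cnj (A $ j $ i))"

definition su3 :: "(complex^3^3) set" where
  "su3 = {A. adjoint3 A = - A \<and> mtrace A = 0}"

definition J21 :: "complex^3^3" where
  "J21 = (\<chi> i j. if i = j then (if i = 3 then -1 else 1) else 0)"

definition su21 :: "(complex^3^3) set" where
  "su21 = {A. adjoint3 A ** J21 + J21 ** A = 0 \<and> mtrace A = 0}"

definition sl3R :: "(real^3^3) set" where
  "sl3R = {A. mtrace A = 0}"

text \<open>The basis X_1..X_8 of R^8: X_i is the unit vector at index idx8 i, where
idx8 i = of_nat i :: 8 (a bijection from {1..8} onto the index type 8).\<close>
definition idx8 :: "nat \<Rightarrow> 8" where "idx8 i = of_nat i"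

definition basisX :: "nat \<Rightarrow> real^8" where "basisX i = axis (idx8 i) 1"

definition antisym_sc :: "(nat \<Rightarrow> nat \<Rightarrow> nat \<Rightarrow> real) \<Rightarrow> nat \<Rightarrow> nat \<Rightarrow> nat \<Rightarrow> real" where
  "antisym_sc C i j k = (if i < j then C i j k else if j < i then - C j i k else 0)"

definition sc_bracket :: "(nat \<Rightarrow> nat \<Rightarrow> nat \<Rightarrow> real) \<Rightarrow> real^8 \<Rightarrow> real^8 \<Rightarrow> real^8" where
  "sc_bracket C x y = (\<Sum>i\<in>{1..8}. \<Sum>j\<in>{1..8}.
      (x $ idx8 i * y $ idx8 j) *\<^sub>R (\<Sum>k\<in>{1..8}. antisym_sc C i j k *\<^sub>R basisX k))"

definition sc_table :: "((nat \<times> nat \<times> nat) \<times> real) list \<Rightarrow> nat \<Rightarrow> nat \<Rightarrow> nat \<Rightarrow> real" where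
  "sc_table l i j k = (case map_of l (i, j, k) of None \<Rightarrow> 0 | Some c \<Rightarrow> c)"

text \<open>L_{7,2} + L_1: entries ((i,j,k), C_ij^k), i<j.\<close>
definition C_L72 :: "nat \<Rightarrow> nat \<Rightarrow> nat \<Rightarrow> real" where
  "C_L72 = sc_table
    [((2,3,1), 1), ((1,2,3), 1), ((1,3,2), -1),
     ((1,4,7), 1/2), ((1,5,6), 1/2), ((1,6,5), -1/2), ((1,7,4), -1/2),
     ((2,4,5), 1/2), ((2,5,4), -1/2), ((2,6,7), 1/2), ((2,7,6), -1/2),
     ((3,4,6), 1/2), ((3,5,7), -1/2), ((3,6,4), -1/2), ((3,7,5), 1/2)]"

definition C_L77 :: "nat \<Rightarrow> nat \<Rightarrow> nat \<Rightarrow> real" where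
  "C_L77 = sc_table
    [((1,2,2), 2), ((1,3,3), -2), ((2,3,1), 1), ((1,4,4), 1), ((1,5,5), -1),
     ((2,5,4), 1), ((2,7,6), 1), ((3,4,5), 1), ((1,6,6), 1), ((1,7,7), -1),
     ((3,6,7), 1)]"

definition L72_L1 :: "real^8 \<Rightarrow> real^8 \<Rightarrow> real^8" where
  "L72_L1 = sc_bracket C_L72"

definition L77_L1 :: "real^8 \<Rightarrow> real^8 \<Rightarrow> real^8" where
  "L77_L1 = sc_bracket C_L77"

end

theory Submission
  imports Defs "HOL-Real_Asymp.Real_Asymp"
begin

text \<open>
  All four contractions are Inonu-Wigner contractions. Suppose \<open>X\<^sub>1, X\<^sub>2, X\<^sub>3\<close> span a
  subalgebra h: su(2) in su(3) and in su(2,1), su(1,1) in su(2,1), sl(2,R) in sl(3,R).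
  Let \<open>\<Phi>\<^sub>t\<close> be the identity on h and multiplication by \<open>1/t\<close> on the span of
  \<open>X\<^sub>4, \<dots>, X\<^sub>8\<close>. The coefficient of \<open>X\<^sub>k\<close> in \<open>\<Phi>\<^sub>t\<^sup>-\<^sup>1[\<Phi>\<^sub>t X\<^sub>i, \<Phi>\<^sub>t X\<^sub>j]\<close> is
  \<open>C\<^sub>i\<^sub>j\<^sup>k w\<^sub>i w\<^sub>j / w\<^sub>k\<close> with \<open>w = 1\<close> on h and \<open>w = 1/t\<close> off it; as \<open>t \<rightarrow> \<infinity>\<close> this keeps
  the brackets inside h and the part outside h of the brackets of h with its complement, and
  kills everything else. So it suffices to exhibit in each real form a basis whose contracted
  structure constants are those of \<open>L\<^sub>7\<^sub>,\<^sub>2 \<oplus> L\<^sub>1\<close> or \<open>L\<^sub>7\<^sub>,\<^sub>7 \<oplus> L\<^sub>1\<close>, which is a finite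
  computation.
\<close>

section \<open>Brackets with given structure constants on \<open>\<real>\<^sup>8\<close>\<close>

lemma atLeastAtMost_1_8_eq: "{1..8::nat} = {1, 2, 3, 4, 5, 6, 7, 8}"
  by auto

lemma inj_on_idx8: "inj_on idx8 {1..8}"
  unfolding atLeastAtMost_1_8_eq idx8_def by (simp add: inj_on_def)

lemma idx8_image: "idx8 ` {1..8} = UNIV"
proof -
  have "card (idx8 ` {1..8}) = CARD(8)"
    using card_image[OF inj_on_idx8] by simp
  then show ?thesis
    by (intro card_subset_eq) auto
qed

lemma vec8_eqI:
  assumes "\<And>m. m \<in> {1..8} \<Longrightarrow> x $ idx8 m = y $ idx8 m"
  shows "x = (y :: 'a ^ 8)"
  using assms idx8_image by (metis imageE vec_eq_iff UNIV_I)

lemma basisX_nth: "i \<in> {1..8} \<Longrightarrow> k \<in> {1..8} \<Longrightarrow> basisX i $ idx8 k = (if i = k then 1 else 0)"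
  using inj_onD[OF inj_on_idx8, of i k] unfolding basisX_def by (auto simp: axis_def)

lemma sum_mult_basisX_nth:
  assumes "m \<in> {1..8}"
  shows "(\<Sum>k\<in>{1..8}. c k * basisX k $ idx8 m) = c m"
proof -
  have "(\<Sum>k\<in>{1..8}. c k * basisX k $ idx8 m) = (\<Sum>k\<in>{1..8}. if k = m then c k else 0)"
    using assms by (intro sum.cong) (auto simp: basisX_nth)
  then show ?thesis
    using assms by simp
qed

lemma sum_basisX_nth:
  assumes "m \<in> {1..8}"
  shows "(\<Sum>k\<in>{1..8}. c k *\<^sub>R basisX k) $ idx8 m = c m"
  by (simp only: sum_component vector_scaleR_component real_scaleR_def sum_mult_basisX_nth[OF assms])

definition const_bracket :: "(nat \<Rightarrow> nat \<Rightarrow> nat \<Rightarrow> real) \<Rightarrow> real^8 \<Rightarrow> real^8 \<Rightarrow> real^8" where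
  "const_bracket D x y = (\<Sum>i\<in>{1..8}. \<Sum>j\<in>{1..8}.
      (x $ idx8 i * y $ idx8 j) *\<^sub>R (\<Sum>k\<in>{1..8}. D i j k *\<^sub>R basisX k))"

lemma const_bracket_nth:
  "m \<in> {1..8} \<Longrightarrow> const_bracket D x y $ idx8 m = (\<Sum>i\<in>{1..8}. \<Sum>j\<in>{1..8}. x $ idx8 i * y $ idx8 j * D i j m)"
  unfolding const_bracket_def
  by (simp only: sum_component vector_scaleR_component real_scaleR_def sum_mult_basisX_nth)

lemma sc_bracket_eq_const_bracket:
  assumes antisym: "\<And>i j k. i \<in> {1..8} \<Longrightarrow> j \<in> {1..8} \<Longrightarrow> k \<in> {1..8} \<Longrightarrow> D j i k = - D i j k"
    and upper: "\<And>i j k. i \<in> {1..8} \<Longrightarrow> j \<in> {1..8} \<Longrightarrow> k \<in> {1..8} \<Longrightarrow> i < j \<Longrightarrow> C i j k = D i j k"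
  shows "sc_bracket C = const_bracket D"
proof -
  have "antisym_sc C i j k = D i j k" if "i \<in> {1..8}" "j \<in> {1..8}" "k \<in> {1..8}" for i j k
    using upper[OF that] upper[OF that(2,1,3)] antisym[OF that(1,1,3)] antisym[OF that]
    by (cases i j rule: linorder_cases) (auto simp: antisym_sc_def)
  then show ?thesis
    unfolding fun_eq_iff sc_bracket_def const_bracket_def
    by (intro allI sum.cong refl arg_cong2[where f = scaleR]) auto
qed

section \<open>Inonu-Wigner contraction in coordinates\<close>

definition inonu_wigner :: "nat set \<Rightarrow> (nat \<Rightarrow> nat \<Rightarrow> nat \<Rightarrow> real) \<Rightarrow> nat \<Rightarrow> nat \<Rightarrow> nat \<Rightarrow> real" where
  "inonu_wigner S D i j k =
     (if (i \<in> S \<and> j \<in> S \<and> k \<in> S) \<or> (k \<notin> S \<and> (i \<in> S) \<noteq> (j \<in> S)) then D i j k else 0)"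

definition partial_scaling :: "nat set \<Rightarrow> real \<Rightarrow> real^8 \<Rightarrow> real^8" where
  "partial_scaling S s x = (\<Sum>i\<in>{1..8}. ((if i \<in> S then 1 else s) * x $ idx8 i) *\<^sub>R basisX i)"

lemma partial_scaling_nth:
  "m \<in> {1..8} \<Longrightarrow> partial_scaling S s x $ idx8 m = (if m \<in> S then 1 else s) * x $ idx8 m"
  unfolding partial_scaling_def by (rule sum_basisX_nth)

lemma partial_scaling_partial_scaling:
  "partial_scaling S a (partial_scaling S b x) = partial_scaling S (a * b) x"
  by (rule vec8_eqI) (simp add: partial_scaling_nth)

lemma partial_scaling_1: "partial_scaling S 1 x = x"
  by (rule vec8_eqI) (simp add: partial_scaling_nth)

lemma linear_partial_scaling: "linear (partial_scaling S s)"
  by (rule linearI) (simp_all add: partial_scaling_def algebra_simps sum.distrib scaleR_sum_right)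

lemma inonu_wigner_weight_tendsto:
  assumes "i \<in> S \<Longrightarrow> j \<in> S \<Longrightarrow> k \<notin> S \<Longrightarrow> D i j k = 0"
  shows "((\<lambda>t. D i j k * ((if i \<in> S then 1 else 1 / t) * (if j \<in> S then 1 else 1 / t) * (if k \<in> S then 1 else t)))
           \<longlongrightarrow> inonu_wigner S D i j k) at_top"
proof (cases "i \<in> S \<and> j \<in> S \<and> k \<notin> S")
  case True
  then show ?thesis using assms by (simp add: inonu_wigner_def)
next
  case False
  then have "((\<lambda>t. (if i \<in> S then 1 else 1 / t) * (if j \<in> S then 1 else 1 / t) * (if k \<in> S then 1 else t))
           \<longlongrightarrow> inonu_wigner S (\<lambda>_ _ _. 1) i j k) at_top"
    unfolding inonu_wigner_def
    by (cases "i \<in> S"; cases "j \<in> S"; cases "k \<in> S"; simp only: if_True if_False simp_thms; real_asymp)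
  then show ?thesis
    by (auto dest: tendsto_mult_left[where c = "D i j k"] simp: inonu_wigner_def)
qed

lemma rescaled_const_bracket_tendsto:
  assumes subalg: "\<And>i j k. i \<in> S \<Longrightarrow> j \<in> S \<Longrightarrow> k \<in> {1..8} - S \<Longrightarrow> D i j k = 0"
  shows "((\<lambda>t. partial_scaling S t (const_bracket D (partial_scaling S (1 / t) x) (partial_scaling S (1 / t) y)))
           \<longlongrightarrow> const_bracket (inonu_wigner S D) x y) at_top"
proof (rule vec_tendstoI)
  fix a :: 8
  obtain m where m: "m \<in> {1..8}" "a = idx8 m"
    using idx8_image by blast
  have "((\<lambda>t. \<Sum>i\<in>{1..8}. \<Sum>j\<in>{1..8}. x $ idx8 i * y $ idx8 j *
           (D i j m * ((if i \<in> S then 1 else 1 / t) * (if j \<in> S then 1 else 1 / t) * (if m \<in> S then 1 else t))))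
         \<longlongrightarrow> (\<Sum>i\<in>{1..8}. \<Sum>j\<in>{1..8}. x $ idx8 i * y $ idx8 j * inonu_wigner S D i j m)) at_top"
    using m(1) subalg by (intro tendsto_sum tendsto_mult_left inonu_wigner_weight_tendsto) auto
  then show "((\<lambda>t. partial_scaling S t (const_bracket D (partial_scaling S (1 / t) x) (partial_scaling S (1 / t) y)) $ a)
           \<longlongrightarrow> const_bracket (inonu_wigner S D) x y $ a) at_top"
    using m by (simp add: partial_scaling_nth const_bracket_nth sum_distrib_left mult_ac)
qed

theorem const_bracket_contraction:
  assumes "\<And>i j k. i \<in> S \<Longrightarrow> j \<in> S \<Longrightarrow> k \<in> {1..8} - S \<Longrightarrow> D i j k = 0"
  shows "is_contraction_of UNIV (const_bracket (inonu_wigner S D)) UNIV (const_bracket D)"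
proof -
  let ?\<Phi> = "\<lambda>t. partial_scaling S (1 / t)"
  have inverse: "partial_scaling S t (?\<Phi> t x) = x" "?\<Phi> t (partial_scaling S t x) = x"
    if "t \<noteq> 0" for t x
    using that by (simp_all add: partial_scaling_partial_scaling partial_scaling_1)
  have bij: "bij_betw (?\<Phi> t) UNIV UNIV" if "t \<noteq> 0" for t
    by (rule bij_betw_byWitness[where f' = "partial_scaling S t"]) (auto simp: inverse that)
  have inv: "inv_into UNIV (?\<Phi> t) z = partial_scaling S t z" if "t \<noteq> 0" for t z
    by (rule inv_into_f_eq[OF bij_betw_imp_inj_on[OF bij]]) (auto simp: inverse that)
  have "((\<lambda>t. inv_into UNIV (?\<Phi> t) (const_bracket D (?\<Phi> t x) (?\<Phi> t y)))
          \<longlongrightarrow> const_bracket (inonu_wigner S D) x y) at_top" for x y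
  proof (rule tendsto_cong[THEN iffD1, OF _ rescaled_const_bracket_tendsto[OF assms]])
    show "\<forall>\<^sub>F t in at_top. partial_scaling S t (const_bracket D (?\<Phi> t x) (?\<Phi> t y)) =
        inv_into UNIV (?\<Phi> t) (const_bracket D (?\<Phi> t x) (?\<Phi> t y))"
      using eventually_gt_at_top[of 0] by eventually_elim (simp add: inv)
  qed
  moreover have "lie_iso UNIV (const_bracket (inonu_wigner S D)) UNIV (const_bracket (inonu_wigner S D)) id"
    by (simp add: lie_iso_def linear_id)
  ultimately show ?thesis
    unfolding is_contraction_of_def using linear_partial_scaling bij by (intro exI[of _ ?\<Phi>]) auto
qed

section \<open>Dual bases and transport of contractions\<close>

lemma is_contraction_of_transfer:
  fixes f :: "'a::real_normed_vector \<Rightarrow> 'b::euclidean_space"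
  assumes f: "linear f" and g: "linear g" and gV: "\<And>x. g x \<in> V"
    and fg: "\<And>x. f (g x) = x" and gf: "\<And>A. A \<in> V \<Longrightarrow> g (f A) = A"
    and brV: "\<And>A B. A \<in> V \<Longrightarrow> B \<in> V \<Longrightarrow> br A B \<in> V"
    and f_br: "\<And>A B. A \<in> V \<Longrightarrow> B \<in> V \<Longrightarrow> f (br A B) = br' (f A) (f B)"
    and contr: "is_contraction_of W b UNIV br'"
  shows "is_contraction_of W b V br"
proof -
  obtain \<Phi> :: "real \<Rightarrow> 'b \<Rightarrow> 'b" and brinf h where
    \<Phi>: "\<forall>t\<ge>1. linear (\<Phi> t) \<and> bij_betw (\<Phi> t) UNIV UNIV"
    and lim: "\<forall>x\<in>UNIV. \<forall>y\<in>UNIV. ((\<lambda>t. inv_into UNIV (\<Phi> t) (br' (\<Phi> t x) (\<Phi> t y))) \<longlongrightarrow> brinf x y) at_top"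
    and iso: "lie_iso UNIV brinf W b h"
    using contr unfolding is_contraction_of_def by blast
  define \<Phi>' where "\<Phi>' t = g \<circ> \<Phi> t \<circ> f" for t
  have \<Phi>'_apply: "\<Phi>' t A = g (\<Phi> t (f A))" for t A
    by (simp add: \<Phi>'_def)
  have bij_f: "bij_betw f V UNIV"
    by (rule bij_betw_byWitness[where f' = g]) (auto simp: fg gf gV)
  have \<Phi>': "linear (\<Phi>' t) \<and> bij_betw (\<Phi>' t) V V" if "t \<ge> 1" for t
  proof
    show "linear (\<Phi>' t)"
      unfolding \<Phi>'_def using f g \<Phi>[rule_format, OF that] by (blast intro: linear_compose)
    have "bij_betw g UNIV V"
      by (rule bij_betw_byWitness[where f' = f]) (auto simp: fg gf gV)
    then show "bij_betw (\<Phi>' t) V V"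
      unfolding \<Phi>'_def using bij_f \<Phi>[rule_format, OF that] by (blast intro: bij_betw_trans)
  qed
  have inv: "inv_into V (\<Phi>' t) A = g (inv_into UNIV (\<Phi> t) (f A))" if "t \<ge> 1" "A \<in> V" for t A
  proof (rule inv_into_f_eq[OF bij_betw_imp_inj_on[OF \<Phi>'[OF that(1), THEN conjunct2]]])
    show "g (inv_into UNIV (\<Phi> t) (f A)) \<in> V"
      by (rule gV)
    show "\<Phi>' t (g (inv_into UNIV (\<Phi> t) (f A))) = A"
      using \<Phi>[rule_format, OF that(1)] that(2)
      by (simp add: \<Phi>'_apply fg gf bij_is_surj surj_f_inv_f)
  qed
  define brinf' where "brinf' X Y = g (brinf (f X) (f Y))" for X Y
  have "((\<lambda>t. inv_into V (\<Phi>' t) (br (\<Phi>' t X) (\<Phi>' t Y))) \<longlongrightarrow> brinf' X Y) at_top"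
    if "X \<in> V" "Y \<in> V" for X Y
  proof (rule tendsto_cong[THEN iffD1])
    show "\<forall>\<^sub>F t in at_top. g (inv_into UNIV (\<Phi> t) (br' (\<Phi> t (f X)) (\<Phi> t (f Y)))) =
        inv_into V (\<Phi>' t) (br (\<Phi>' t X) (\<Phi>' t Y))"
      using eventually_ge_at_top[of 1]
      by eventually_elim (simp add: \<Phi>'_apply inv brV gV f_br fg)
    have "isCont g z" for z
      using g by (simp add: linear_continuous_at linear_conv_bounded_linear)
    then show "((\<lambda>t. g (inv_into UNIV (\<Phi> t) (br' (\<Phi> t (f X)) (\<Phi> t (f Y))))) \<longlongrightarrow> brinf' X Y) at_top"
      unfolding brinf'_def by (rule isCont_tendsto_compose[OF _ lim[rule_format, OF UNIV_I UNIV_I]])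
  qed
  moreover have "lie_iso V brinf' W b (h \<circ> f)"
    using iso f bij_f unfolding lie_iso_def brinf'_def
    by (auto simp: fg intro: linear_compose bij_betw_trans)
  ultimately show ?thesis
    unfolding is_contraction_of_def using \<Phi>' by blast
qed

definition dual_basis :: "'a::real_vector set \<Rightarrow> (nat \<Rightarrow> 'a) \<Rightarrow> (nat \<Rightarrow> 'a \<Rightarrow> real) \<Rightarrow> bool" where
  "dual_basis V E c \<longleftrightarrow> subspace V \<and> (\<forall>i\<in>{1..8}. E i \<in> V) \<and> (\<forall>k\<in>{1..8}. linear (c k)) \<and>
     (\<forall>i\<in>{1..8}. \<forall>k\<in>{1..8}. c k (E i) = (if i = k then 1 else 0)) \<and>
     (\<forall>A\<in>V. (\<Sum>i\<in>{1..8}. c i A *\<^sub>R E i) = A)"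

lemma dual_basisI:
  assumes V: "subspace V" and E: "\<forall>i\<in>{1..8}. E i \<in> V" and c: "\<forall>k\<in>{1..8}. linear (c k)"
    and dual: "\<forall>i\<in>{1..8}. \<forall>k\<in>{1..8}. c k (E i) = (if i = k then 1 else 0)"
    and separating: "\<And>A. A \<in> V \<Longrightarrow> \<forall>k\<in>{1..8}. c k A = 0 \<Longrightarrow> A = 0"
  shows "dual_basis V E c"
proof -
  have "(\<Sum>i\<in>{1..8}. c i A *\<^sub>R E i) = A" if A: "A \<in> V" for A
  proof -
    let ?B = "A - (\<Sum>i\<in>{1..8}. c i A *\<^sub>R E i)"
    have "?B \<in> V"
      using V A E by (intro subspace_diff subspace_sum subspace_scale) auto
    moreover have "c k ?B = 0" if k: "k \<in> {1..8}" for k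
    proof -
      have "c k ?B = c k A - (\<Sum>i\<in>{1..8}. c i A * c k (E i))"
        using c k by (simp add: linear_diff linear_sum linear_scale)
      also have "(\<Sum>i\<in>{1..8}. c i A * c k (E i)) = (\<Sum>i\<in>{1..8}. if i = k then c i A else 0)"
        using k dual by (intro sum.cong) auto
      finally show ?thesis
        using k by simp
    qed
    ultimately show ?thesis
      using separating by fastforce
  qed
  then show ?thesis
    using V E c dual unfolding dual_basis_def by blast
qed

definition coords :: "(nat \<Rightarrow> 'a \<Rightarrow> real) \<Rightarrow> 'a \<Rightarrow> real^8" where
  "coords c A = (\<Sum>k\<in>{1..8}. c k A *\<^sub>R basisX k)"

definition lincomb :: "(nat \<Rightarrow> 'a::real_vector) \<Rightarrow> real^8 \<Rightarrow> 'a" where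
  "lincomb E x = (\<Sum>i\<in>{1..8}. x $ idx8 i *\<^sub>R E i)"

definition structure_constants ::
  "(nat \<Rightarrow> 'a \<Rightarrow> real) \<Rightarrow> (nat \<Rightarrow> 'a) \<Rightarrow> ('a \<Rightarrow> 'a \<Rightarrow> 'a) \<Rightarrow> nat \<Rightarrow> nat \<Rightarrow> nat \<Rightarrow> real" where
  "structure_constants c E br i j k = c k (br (E i) (E j))"

lemma coords_nth: "m \<in> {1..8} \<Longrightarrow> coords c A $ idx8 m = c m A"
  unfolding coords_def by (rule sum_basisX_nth)

lemma linear_lincomb: "linear (lincomb E)"
  by (rule linearI) (simp_all add: lincomb_def scaleR_add_left sum.distrib scaleR_sum_right)

context
  fixes V :: "'a::real_vector set" and E c
  assumes basis: "dual_basis V E c"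
begin

lemma linear_coords: "linear (coords c)"
proof -
  have "linear (\<lambda>A. c k A *\<^sub>R basisX k)" if "k \<in> {1..8}" for k
  proof -
    have "linear (c k)"
      using basis that unfolding dual_basis_def by blast
    from linear_compose[OF this linear_scaleR_left] show ?thesis
      by (simp add: comp_def)
  qed
  then show ?thesis
    unfolding coords_def by (intro linear_compose_sum ballI)
qed

lemma lincomb_in: "lincomb E x \<in> V"
  using basis unfolding dual_basis_def lincomb_def by (auto intro: subspace_sum subspace_scale)

lemma coords_lincomb: "coords c (lincomb E x) = x"
proof (rule vec8_eqI)
  fix m :: nat
  assume m: "m \<in> {1..8}"
  have "c m (lincomb E x) = (\<Sum>i\<in>{1..8}. x $ idx8 i * c m (E i))"
    using basis m unfolding dual_basis_def lincomb_def by (simp add: linear_sum linear_scale)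
  also have "\<dots> = (\<Sum>i\<in>{1..8}. if i = m then x $ idx8 i else 0)"
    using basis m unfolding dual_basis_def by (intro sum.cong) auto
  also have "\<dots> = x $ idx8 m"
    using m by simp
  finally show "coords c (lincomb E x) $ idx8 m = x $ idx8 m"
    using m by (simp add: coords_nth)
qed

lemma lincomb_coords: "A \<in> V \<Longrightarrow> lincomb E (coords c A) = A"
  using basis unfolding dual_basis_def lincomb_def by (simp add: coords_nth)

lemma coords_bracket:
  assumes "bilinear br" "A \<in> V" "B \<in> V"
  shows "coords c (br A B) = const_bracket (structure_constants c E br) (coords c A) (coords c B)"
proof -
  have "br A B = br (lincomb E (coords c A)) (lincomb E (coords c B))"
    using assms by (simp add: lincomb_coords)
  also have "\<dots> = (\<Sum>i\<in>{1..8}. \<Sum>j\<in>{1..8}. (coords c A $ idx8 i * coords c B $ idx8 j) *\<^sub>R br (E i) (E j))"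
    unfolding lincomb_def bilinear_sum[OF assms(1)] sum.cartesian_product[symmetric]
    by (simp add: bilinear_lmul[OF assms(1)] bilinear_rmul[OF assms(1)] mult.commute)
  finally have expand: "br A B = \<dots>" .
  show ?thesis
  proof (rule vec8_eqI)
    fix m :: nat
    assume m: "m \<in> {1..8}"
    then have "linear (c m)"
      using basis unfolding dual_basis_def by blast
    then show "coords c (br A B) $ idx8 m =
        const_bracket (structure_constants c E br) (coords c A) (coords c B) $ idx8 m"
      using m unfolding expand
      by (simp add: coords_nth const_bracket_nth linear_sum linear_scale structure_constants_def)
  qed
qed

end

theorem inonu_wigner_contraction:
  assumes basis: "dual_basis V E c" and bil: "bilinear br"
    and closed: "\<And>A B. A \<in> V \<Longrightarrow> B \<in> V \<Longrightarrow> br A B \<in> V"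
    and subalg: "\<And>i j k. i \<in> S \<Longrightarrow> j \<in> S \<Longrightarrow> k \<in> {1..8} - S \<Longrightarrow>
      structure_constants c E br i j k = 0"
  shows "is_contraction_of UNIV (const_bracket (inonu_wigner S (structure_constants c E br))) V br"
  using linear_coords[OF basis] linear_lincomb lincomb_in[OF basis] coords_lincomb[OF basis]
    lincomb_coords[OF basis] closed coords_bracket[OF basis bil] const_bracket_contraction[OF subalg]
  by (rule is_contraction_of_transfer)

corollary inonu_wigner_contraction_sc_bracket:
  assumes basis: "dual_basis V E c" and bil: "bilinear br"
    and closed: "\<And>A B. A \<in> V \<Longrightarrow> B \<in> V \<Longrightarrow> br A B \<in> V"
    and antisym: "\<And>A B. A \<in> V \<Longrightarrow> B \<in> V \<Longrightarrow> br B A = - br A B"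
    and S: "S \<subseteq> {1..8}"
    and subalg: "\<forall>i\<in>S. \<forall>j\<in>S. i < j \<longrightarrow>
      (\<forall>k\<in>{1..8}. k \<notin> S \<longrightarrow> structure_constants c E br i j k = 0)"
    and table: "\<forall>i\<in>{1..8}. \<forall>j\<in>{1..8}. i < j \<longrightarrow>
      (\<forall>k\<in>{1..8}. C i j k = inonu_wigner S (structure_constants c E br) i j k)"
  shows "is_contraction_of UNIV (sc_bracket C) V br"
proof -
  let ?D = "structure_constants c E br"
  have antisym_D: "?D j i k = - ?D i j k" if "i \<in> {1..8}" "j \<in> {1..8}" "k \<in> {1..8}" for i j k
  proof -
    have lin: "linear (c k)" and "E i \<in> V" "E j \<in> V"
      using basis that unfolding dual_basis_def by blast+
    show ?thesis
      unfolding structure_constants_def antisym[OF \<open>E i \<in> V\<close> \<open>E j \<in> V\<close>]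
      using lin by (rule linear_neg)
  qed
  have "?D i j k = 0" if "i \<in> S" "j \<in> S" "k \<in> {1..8} - S" for i j k
  proof (cases i j rule: linorder_cases)
    case less
    then show ?thesis
      using subalg that by blast
  next
    case equal
    then show ?thesis
      using antisym_D[of i i k] that S by auto
  next
    case greater
    have "i \<in> {1..8}" "j \<in> {1..8}"
      using that S by auto
    then show ?thesis
      using subalg antisym_D[of j i k] that greater by auto
  qed
  then have contraction: "is_contraction_of UNIV (const_bracket (inonu_wigner S ?D)) V br"
    by (intro inonu_wigner_contraction[OF basis bil closed])
  have "sc_bracket C = const_bracket (inonu_wigner S ?D)"
  proof (rule sc_bracket_eq_const_bracket)
    show "inonu_wigner S ?D j i k = - inonu_wigner S ?D i j k"
      if "i \<in> {1..8}" "j \<in> {1..8}" "k \<in> {1..8}" for i j k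
      using antisym_D[OF that] by (simp add: inonu_wigner_def conj_commute)
  qed (use table in blast)
  with contraction show ?thesis
    by simp
qed

section \<open>The real forms of sl(3,C)\<close>

lemma matrix_mult_nth3:
  fixes A B :: "'a::semiring_1^3^3"
  shows "(A ** B) $ r $ s = A $ r $ 1 * B $ 1 $ s + A $ r $ 2 * B $ 2 $ s + A $ r $ 3 * B $ 3 $ s"
  by (simp add: matrix_matrix_mult_def sum_3)

lemma commutator_nth3:
  fixes A B :: "'a::comm_ring_1^3^3"
  shows "commutator A B $ r $ s = A $ r $ 1 * B $ 1 $ s + A $ r $ 2 * B $ 2 $ s + A $ r $ 3 * B $ 3 $ s
      - (B $ r $ 1 * A $ 1 $ s + B $ r $ 2 * A $ 2 $ s + B $ r $ 3 * A $ 3 $ s)"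
  by (simp add: commutator_def matrix_mult_nth3)

lemma bilinear_commutator: "bilinear (commutator :: 'a::{real_algebra_1, comm_ring_1}^'n^'n \<Rightarrow> _)"
  unfolding bilinear_def commutator_def
  by (auto intro!: linearI simp: vec_eq_iff matrix_matrix_mult_def algebra_simps sum.distrib
      sum_subtractf scaleR_sum_right)

lemma commutator_swap: "commutator B A = - commutator A B"
  by (simp add: commutator_def)

lemma mtrace_commutator: "mtrace (commutator A B) = 0"
  using trace_mul_sym[of A B] by (simp add: commutator_def mtrace_def trace_def sum_subtractf)

lemma matrix_add_rdistrib: "(A + B) ** C = A ** C + B ** C"
  by (simp add: matrix_matrix_mult_def vec_eq_iff distrib_right sum.distrib)

lemma matrix_diff_rdistrib: "(A - B) ** C = A ** C - B ** (C :: 'a::ring_1^'n^'m)"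
  by (simp add: matrix_matrix_mult_def vec_eq_iff left_diff_distrib sum_subtractf)

lemma matrix_diff_ldistrib: "C ** (A - B) = C ** A - C ** (B :: 'a::ring_1^'n^'m)"
  by (simp add: matrix_matrix_mult_def vec_eq_iff right_diff_distrib sum_subtractf)

lemma matrix_mult_scaleR_left: "(r *\<^sub>R A) ** B = r *\<^sub>R (A ** B :: 'a::real_algebra_1^'n^'m)"
  by (simp add: scalar_matrix_assoc)

lemma matrix_mult_scaleR_right: "A ** (r *\<^sub>R B) = r *\<^sub>R (A ** B :: 'a::real_algebra_1^'n^'m)"
  by (simp add: matrix_scalar_ac scalar_matrix_assoc)

lemma matrix_mult_uminus_left: "(- A) ** B = - (A ** B :: 'a::ring_1^'n^'m)"
  by (simp add: matrix_matrix_mult_def vec_eq_iff sum_negf)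

lemma matrix_mult_uminus_right: "A ** (- B) = - (A ** B :: 'a::ring_1^'n^'m)"
  by (simp add: matrix_matrix_mult_def vec_eq_iff sum_negf)

lemma adjoint3_mult: "adjoint3 (A ** B) = adjoint3 B ** adjoint3 A"
  by (simp add: adjoint3_def vec_eq_iff matrix_mult_nth3 ac_simps)

lemma adjoint3_diff: "adjoint3 (A - B) = adjoint3 A - adjoint3 B"
  by (simp add: adjoint3_def vec_eq_iff)

lemma adjoint3_add: "adjoint3 (A + B) = adjoint3 A + adjoint3 B"
  by (simp add: adjoint3_def vec_eq_iff)

lemma adjoint3_scaleR: "adjoint3 (r *\<^sub>R A) = r *\<^sub>R adjoint3 A"
  by (simp add: adjoint3_def vec_eq_iff)

lemma adjoint3_0: "adjoint3 0 = 0"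
  by (simp add: adjoint3_def vec_eq_iff)

lemma mtrace_0: "mtrace 0 = 0"
  by (simp add: mtrace_def)

lemma mtrace_add: "mtrace (A + B) = mtrace A + mtrace B"
  by (simp add: mtrace_def sum.distrib)

lemma mtrace_scaleR: "mtrace (r *\<^sub>R A) = r *\<^sub>R mtrace A"
  by (simp add: mtrace_def scaleR_sum_right)

lemma subspace_su3: "subspace su3"
  unfolding subspace_def su3_def
  by (simp add: adjoint3_0 mtrace_0 adjoint3_add adjoint3_scaleR mtrace_add mtrace_scaleR)

lemma subspace_su21: "subspace su21"
  unfolding subspace_def su21_def
  by (simp add: adjoint3_0 mtrace_0 adjoint3_add adjoint3_scaleR mtrace_add mtrace_scaleR
      matrix_add_ldistrib matrix_add_rdistrib matrix_mult_scaleR_left matrix_mult_scaleR_right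
      algebra_simps scaleR_add_right[symmetric])

lemma subspace_sl3R: "subspace sl3R"
  unfolding subspace_def sl3R_def by (simp add: mtrace_0 mtrace_add mtrace_scaleR)

lemma commutator_in_su3: "A \<in> su3 \<Longrightarrow> B \<in> su3 \<Longrightarrow> commutator A B \<in> su3"
  using mtrace_commutator[of A B]
  by (simp add: su3_def commutator_def adjoint3_diff adjoint3_mult matrix_mult_uminus_left
      matrix_mult_uminus_right)

lemma commutator_in_su21:
  assumes "A \<in> su21" "B \<in> su21"
  shows "commutator A B \<in> su21"
proof -
  have adjoint_J21: "adjoint3 (X ** Y) ** J21 = J21 ** (Y ** X)" if "X \<in> su21" "Y \<in> su21" for X Y
  proof -
    have X: "adjoint3 X ** J21 = - (J21 ** X)" and Y: "adjoint3 Y ** J21 = - (J21 ** Y)"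
      using that by (simp_all add: su21_def eq_neg_iff_add_eq_0)
    have "adjoint3 (X ** Y) ** J21 = adjoint3 Y ** (adjoint3 X ** J21)"
      by (simp add: adjoint3_mult matrix_mul_assoc)
    also have "\<dots> = - ((adjoint3 Y ** J21) ** X)"
      by (simp add: X matrix_mul_assoc matrix_mult_uminus_right)
    also have "\<dots> = J21 ** (Y ** X)"
      by (simp add: Y matrix_mul_assoc matrix_mult_uminus_left)
    finally show ?thesis .
  qed
  then show ?thesis
    using mtrace_commutator[of A B] adjoint_J21[OF assms] adjoint_J21[OF assms(2,1)]
    by (simp add: su21_def commutator_def adjoint3_diff matrix_diff_rdistrib matrix_diff_ldistrib)
qed

lemma commutator_in_sl3R: "commutator A B \<in> sl3R"
  by (simp add: sl3R_def mtrace_commutator)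

lemma su3_entries:
  assumes "A \<in> su3"
  shows "Re (A $ 1 $ 1) = 0" "Re (A $ 2 $ 2) = 0" "Re (A $ 3 $ 3) = 0"
    "A $ 2 $ 1 = - cnj (A $ 1 $ 2)" "A $ 3 $ 1 = - cnj (A $ 1 $ 3)" "A $ 3 $ 2 = - cnj (A $ 2 $ 3)"
    "A $ 1 $ 1 + A $ 2 $ 2 + A $ 3 $ 3 = 0"
proof -
  have anti: "cnj (A $ s $ r) = - A $ r $ s" for r s
    using assms by (simp add: su3_def adjoint3_def vec_eq_iff)
  show "Re (A $ 1 $ 1) = 0" "Re (A $ 2 $ 2) = 0" "Re (A $ 3 $ 3) = 0"
    "A $ 2 $ 1 = - cnj (A $ 1 $ 2)" "A $ 3 $ 1 = - cnj (A $ 1 $ 3)" "A $ 3 $ 2 = - cnj (A $ 2 $ 3)"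
    using anti[of 1 1] anti[of 2 2] anti[of 3 3] anti[of 1 2] anti[of 1 3] anti[of 2 3]
    by (simp_all add: complex_eq_iff)
  show "A $ 1 $ 1 + A $ 2 $ 2 + A $ 3 $ 3 = 0"
    using assms by (simp add: su3_def mtrace_def sum_3)
qed

lemma su21_entries:
  assumes "A \<in> su21"
  shows "Re (A $ 1 $ 1) = 0" "Re (A $ 2 $ 2) = 0" "Re (A $ 3 $ 3) = 0"
    "A $ 2 $ 1 = - cnj (A $ 1 $ 2)" "A $ 3 $ 1 = cnj (A $ 1 $ 3)" "A $ 3 $ 2 = cnj (A $ 2 $ 3)"
    "A $ 1 $ 1 + A $ 2 $ 2 + A $ 3 $ 3 = 0"
proof -
  have hermitian: "(adjoint3 A ** J21 + J21 ** A) $ r $ s = 0" for r s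
    using assms by (simp add: su21_def)
  show "Re (A $ 1 $ 1) = 0" "Re (A $ 2 $ 2) = 0" "Re (A $ 3 $ 3) = 0"
    "A $ 2 $ 1 = - cnj (A $ 1 $ 2)" "A $ 3 $ 1 = cnj (A $ 1 $ 3)" "A $ 3 $ 2 = cnj (A $ 2 $ 3)"
    using hermitian[of 1 1] hermitian[of 2 2] hermitian[of 3 3] hermitian[of 2 1] hermitian[of 3 1]
      hermitian[of 3 2]
    by (simp_all add: adjoint3_def matrix_mult_nth3 J21_def complex_eq_iff)
  show "A $ 1 $ 1 + A $ 2 $ 2 + A $ 3 $ 3 = 0"
    using assms by (simp add: su21_def mtrace_def sum_3)
qed

section \<open>Bases adapted to the contractions\<close>

definition su3_basis :: "nat \<Rightarrow> complex^3^3" where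
  "su3_basis i =
    [vector [vector [0, - \<i> / 2, 0], vector [- \<i> / 2, 0, 0], vector [0, 0, 0]],
     vector [vector [0, - 1 / 2, 0], vector [1 / 2, 0, 0], vector [0, 0, 0]],
     vector [vector [- \<i> / 2, 0, 0], vector [0, \<i> / 2, 0], vector [0, 0, 0]],
     vector [vector [0, 0, -1], vector [0, 0, 0], vector [1, 0, 0]],
     vector [vector [0, 0, 0], vector [0, 0, -1], vector [0, 1, 0]],
     vector [vector [0, 0, \<i>], vector [0, 0, 0], vector [\<i>, 0, 0]],
     vector [vector [0, 0, 0], vector [0, 0, \<i>], vector [0, \<i>, 0]],
     vector [vector [\<i>, 0, 0], vector [0, \<i>, 0], vector [0, 0, - 2 * \<i>]]] ! (i - 1)"

text \<open>
  Writing \<open>X\<^sub>i\<close> for \<open>su3_basis i\<close>, this basis replaces \<open>X\<^sub>4, X\<^sub>5, X\<^sub>6, X\<^sub>7\<close> by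
  \<open>\<i>X\<^sub>6, \<i>X\<^sub>7, -\<i>X\<^sub>4, -\<i>X\<^sub>5\<close>. That substitution commutes with the adjoint action of su(2), so the
  brackets of su(2) with the complement have the same structure constants as in su(3); only the
  brackets inside the complement differ, and the contraction discards them.
\<close>

definition su21_basis_L72 :: "nat \<Rightarrow> complex^3^3" where
  "su21_basis_L72 i =
    [vector [vector [0, - \<i> / 2, 0], vector [- \<i> / 2, 0, 0], vector [0, 0, 0]],
     vector [vector [0, - 1 / 2, 0], vector [1 / 2, 0, 0], vector [0, 0, 0]],
     vector [vector [- \<i> / 2, 0, 0], vector [0, \<i> / 2, 0], vector [0, 0, 0]],
     vector [vector [0, 0, -1], vector [0, 0, 0], vector [-1, 0, 0]],
     vector [vector [0, 0, 0], vector [0, 0, -1], vector [0, -1, 0]],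
     vector [vector [0, 0, \<i>], vector [0, 0, 0], vector [- \<i>, 0, 0]],
     vector [vector [0, 0, 0], vector [0, 0, \<i>], vector [0, - \<i>, 0]],
     vector [vector [\<i>, 0, 0], vector [0, \<i>, 0], vector [0, 0, - 2 * \<i>]]] ! (i - 1)"

definition su_coords_L72 :: "nat \<Rightarrow> complex^3^3 \<Rightarrow> real" where
  "su_coords_L72 k A =
    (if k = 1 then - 2 * Im (A$1$2) else if k = 2 then - 2 * Re (A$1$2)
     else if k = 3 then Im (A$2$2) - Im (A$1$1) else if k = 4 then - Re (A$1$3)
     else if k = 5 then - Re (A$2$3) else if k = 6 then Im (A$1$3)
     else if k = 7 then Im (A$2$3) else - Im (A$3$3) / 2)"

definition su21_basis_L77 :: "nat \<Rightarrow> complex^3^3" where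
  "su21_basis_L77 i =
    [vector [vector [0, 0, 0], vector [0, 0, 1], vector [0, 1, 0]],
     vector [vector [0, 0, 0], vector [0, \<i>, - \<i>], vector [0, \<i>, - \<i>]],
     vector [vector [0, 0, 0], vector [0, - \<i> / 4, - \<i> / 4], vector [0, \<i> / 4, \<i> / 4]],
     vector [vector [0, - \<i>, \<i>], vector [- \<i>, 0, 0], vector [- \<i>, 0, 0]],
     vector [vector [0, 1 / 2, 1 / 2], vector [- 1 / 2, 0, 0], vector [1 / 2, 0, 0]],
     vector [vector [0, 2, -2], vector [-2, 0, 0], vector [-2, 0, 0]],
     vector [vector [0, \<i>, \<i>], vector [\<i>, 0, 0], vector [- \<i>, 0, 0]],
     vector [vector [- 2 * \<i>, 0, 0], vector [0, \<i>, 0], vector [0, 0, \<i>]]] ! (i - 1)"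

definition su21_coords_L77 :: "nat \<Rightarrow> complex^3^3 \<Rightarrow> real" where
  "su21_coords_L77 k A =
    (if k = 1 then Re (A$2$3) else if k = 2 then (Im (A$2$2) + Im (A$1$1) / 2 - Im (A$2$3)) / 2
     else if k = 3 then - 2 * (Im (A$2$3) + Im (A$2$2) + Im (A$1$1) / 2)
     else if k = 4 then (Im (A$1$3) - Im (A$1$2)) / 2 else if k = 5 then Re (A$1$2) + Re (A$1$3)
     else if k = 6 then (Re (A$1$2) - Re (A$1$3)) / 4 else if k = 7 then (Im (A$1$2) + Im (A$1$3)) / 2
     else - Im (A$1$1) / 2)"

definition sl3_basis :: "nat \<Rightarrow> real^3^3" where
  "sl3_basis i =
    [vector [vector [1, 0, 0], vector [0, -1, 0], vector [0, 0, 0]],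
     vector [vector [0, 1, 0], vector [0, 0, 0], vector [0, 0, 0]],
     vector [vector [0, 0, 0], vector [1, 0, 0], vector [0, 0, 0]],
     vector [vector [0, 0, 1], vector [0, 0, 0], vector [0, 0, 0]],
     vector [vector [0, 0, 0], vector [0, 0, 1], vector [0, 0, 0]],
     vector [vector [0, 0, 0], vector [0, 0, 0], vector [0, 1, 0]],
     vector [vector [0, 0, 0], vector [0, 0, 0], vector [-1, 0, 0]],
     vector [vector [1, 0, 0], vector [0, 1, 0], vector [0, 0, -2]]] ! (i - 1)"

definition sl3_coords :: "nat \<Rightarrow> real^3^3 \<Rightarrow> real" where
  "sl3_coords k A =
    (if k = 1 then (A$1$1 - A$2$2) / 2 else if k = 2 then A$1$2 else if k = 3 then A$2$1
     else if k = 4 then A$1$3 else if k = 5 then A$2$3 else if k = 6 then A$3$2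
     else if k = 7 then - A$3$1 else - A$3$3 / 2)"

lemma dual_basis_su3: "dual_basis su3 su3_basis su_coords_L72"
proof (rule dual_basisI[OF subspace_su3])
  show "\<forall>i\<in>{1..8}. su3_basis i \<in> su3"
    unfolding atLeastAtMost_1_8_eq ball_simps
    by (simp add: su3_basis_def su3_def adjoint3_def mtrace_def sum_3 vec_eq_iff forall_3)
  show "\<forall>k\<in>{1..8}. linear (su_coords_L72 k)"
    unfolding atLeastAtMost_1_8_eq ball_simps linear_iff by (simp add: su_coords_L72_def field_simps)
  show "\<forall>i\<in>{1..8}. \<forall>k\<in>{1..8}. su_coords_L72 k (su3_basis i) = (if i = k then 1 else 0)"
    unfolding atLeastAtMost_1_8_eq ball_simps by (simp add: su_coords_L72_def su3_basis_def)
next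
  fix A
  assume "A \<in> su3" and "\<forall>k\<in>{1..8}. su_coords_L72 k A = 0"
  then show "A = 0"
    using su3_entries[OF \<open>A \<in> su3\<close>] unfolding atLeastAtMost_1_8_eq ball_simps
    by (simp add: su_coords_L72_def vec_eq_iff forall_3 complex_eq_iff)
qed

lemma dual_basis_su21_L72: "dual_basis su21 su21_basis_L72 su_coords_L72"
proof (rule dual_basisI[OF subspace_su21])
  show "\<forall>i\<in>{1..8}. su21_basis_L72 i \<in> su21"
    unfolding atLeastAtMost_1_8_eq ball_simps
    by (simp add: su21_basis_L72_def su21_def adjoint3_def mtrace_def sum_3 matrix_mult_nth3 J21_def
        vec_eq_iff forall_3)
  show "\<forall>k\<in>{1..8}. linear (su_coords_L72 k)"
    unfolding atLeastAtMost_1_8_eq ball_simps linear_iff by (simp add: su_coords_L72_def field_simps)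
  show "\<forall>i\<in>{1..8}. \<forall>k\<in>{1..8}. su_coords_L72 k (su21_basis_L72 i) = (if i = k then 1 else 0)"
    unfolding atLeastAtMost_1_8_eq ball_simps by (simp add: su_coords_L72_def su21_basis_L72_def)
next
  fix A
  assume "A \<in> su21" and "\<forall>k\<in>{1..8}. su_coords_L72 k A = 0"
  then show "A = 0"
    using su21_entries[OF \<open>A \<in> su21\<close>] unfolding atLeastAtMost_1_8_eq ball_simps
    by (simp add: su_coords_L72_def vec_eq_iff forall_3 complex_eq_iff)
qed

lemma dual_basis_su21_L77: "dual_basis su21 su21_basis_L77 su21_coords_L77"
proof (rule dual_basisI[OF subspace_su21])
  show "\<forall>i\<in>{1..8}. su21_basis_L77 i \<in> su21"
    unfolding atLeastAtMost_1_8_eq ball_simps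
    by (simp add: su21_basis_L77_def su21_def adjoint3_def mtrace_def sum_3 matrix_mult_nth3 J21_def
        vec_eq_iff forall_3)
  show "\<forall>k\<in>{1..8}. linear (su21_coords_L77 k)"
    unfolding atLeastAtMost_1_8_eq ball_simps linear_iff by (simp add: su21_coords_L77_def field_simps)
  show "\<forall>i\<in>{1..8}. \<forall>k\<in>{1..8}. su21_coords_L77 k (su21_basis_L77 i) = (if i = k then 1 else 0)"
    unfolding atLeastAtMost_1_8_eq ball_simps by (simp add: su21_coords_L77_def su21_basis_L77_def)
next
  fix A
  assume "A \<in> su21" and "\<forall>k\<in>{1..8}. su21_coords_L77 k A = 0"
  then show "A = 0"
    using su21_entries[OF \<open>A \<in> su21\<close>] unfolding atLeastAtMost_1_8_eq ball_simps
    by (simp add: su21_coords_L77_def vec_eq_iff forall_3 complex_eq_iff)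
qed

lemma dual_basis_sl3R: "dual_basis sl3R sl3_basis sl3_coords"
proof (rule dual_basisI[OF subspace_sl3R])
  show "\<forall>i\<in>{1..8}. sl3_basis i \<in> sl3R"
    unfolding atLeastAtMost_1_8_eq ball_simps by (simp add: sl3_basis_def sl3R_def mtrace_def sum_3)
  show "\<forall>k\<in>{1..8}. linear (sl3_coords k)"
    unfolding atLeastAtMost_1_8_eq ball_simps linear_iff by (simp add: sl3_coords_def field_simps)
  show "\<forall>i\<in>{1..8}. \<forall>k\<in>{1..8}. sl3_coords k (sl3_basis i) = (if i = k then 1 else 0)"
    unfolding atLeastAtMost_1_8_eq ball_simps by (simp add: sl3_coords_def sl3_basis_def)
next
  fix A
  assume "A \<in> sl3R" and "\<forall>k\<in>{1..8}. sl3_coords k A = 0"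
  moreover have "A $ 1 $ 1 + A $ 2 $ 2 + A $ 3 $ 3 = 0"
    using \<open>A \<in> sl3R\<close> by (simp add: sl3R_def mtrace_def sum_3)
  ultimately show "A = 0"
    unfolding atLeastAtMost_1_8_eq ball_simps by (simp add: sl3_coords_def vec_eq_iff forall_3)
qed

lemma su3_basis_subalgebra:
  "\<forall>i\<in>{1, 2, 3}. \<forall>j\<in>{1, 2, 3}. i < j \<longrightarrow>
     (\<forall>k\<in>{1..8}. k \<notin> {1, 2, 3} \<longrightarrow>
        structure_constants su_coords_L72 su3_basis commutator i j k = 0)"
  unfolding atLeastAtMost_1_8_eq ball_simps
  by (simp add: structure_constants_def su_coords_L72_def su3_basis_def commutator_nth3)

lemma L72_inonu_wigner_su3:
  "\<forall>i\<in>{1..8}. \<forall>j\<in>{1..8}. i < j \<longrightarrow> (\<forall>k\<in>{1..8}.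
     C_L72 i j k = inonu_wigner {1, 2, 3} (structure_constants su_coords_L72 su3_basis commutator) i j k)"
  unfolding atLeastAtMost_1_8_eq
  by (simp add: inonu_wigner_def structure_constants_def su_coords_L72_def su3_basis_def
      commutator_nth3 C_L72_def sc_table_def)

lemma su21_basis_L72_subalgebra:
  "\<forall>i\<in>{1, 2, 3}. \<forall>j\<in>{1, 2, 3}. i < j \<longrightarrow>
     (\<forall>k\<in>{1..8}. k \<notin> {1, 2, 3} \<longrightarrow>
        structure_constants su_coords_L72 su21_basis_L72 commutator i j k = 0)"
  unfolding atLeastAtMost_1_8_eq ball_simps
  by (simp add: structure_constants_def su_coords_L72_def su21_basis_L72_def commutator_nth3)

lemma L72_inonu_wigner_su21:
  "\<forall>i\<in>{1..8}. \<forall>j\<in>{1..8}. i < j \<longrightarrow> (\<forall>k\<in>{1..8}.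
     C_L72 i j k = inonu_wigner {1, 2, 3} (structure_constants su_coords_L72 su21_basis_L72 commutator) i j k)"
  unfolding atLeastAtMost_1_8_eq
  by (simp add: inonu_wigner_def structure_constants_def su_coords_L72_def su21_basis_L72_def
      commutator_nth3 C_L72_def sc_table_def)

lemma su21_basis_L77_subalgebra:
  "\<forall>i\<in>{1, 2, 3}. \<forall>j\<in>{1, 2, 3}. i < j \<longrightarrow>
     (\<forall>k\<in>{1..8}. k \<notin> {1, 2, 3} \<longrightarrow>
        structure_constants su21_coords_L77 su21_basis_L77 commutator i j k = 0)"
  unfolding atLeastAtMost_1_8_eq ball_simps
  by (simp add: structure_constants_def su21_coords_L77_def su21_basis_L77_def commutator_nth3)

lemma L77_inonu_wigner_su21:
  "\<forall>i\<in>{1..8}. \<forall>j\<in>{1..8}. i < j \<longrightarrow> (\<forall>k\<in>{1..8}.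
     C_L77 i j k = inonu_wigner {1, 2, 3} (structure_constants su21_coords_L77 su21_basis_L77 commutator) i j k)"
  unfolding atLeastAtMost_1_8_eq
  by (simp add: inonu_wigner_def structure_constants_def su21_coords_L77_def su21_basis_L77_def
      commutator_nth3 C_L77_def sc_table_def)

lemma sl3_basis_subalgebra:
  "\<forall>i\<in>{1, 2, 3}. \<forall>j\<in>{1, 2, 3}. i < j \<longrightarrow>
     (\<forall>k\<in>{1..8}. k \<notin> {1, 2, 3} \<longrightarrow>
        structure_constants sl3_coords sl3_basis commutator i j k = 0)"
  unfolding atLeastAtMost_1_8_eq ball_simps
  by (simp add: structure_constants_def sl3_coords_def sl3_basis_def commutator_nth3)

lemma L77_inonu_wigner_sl3R:
  "\<forall>i\<in>{1..8}. \<forall>j\<in>{1..8}. i < j \<longrightarrow> (\<forall>k\<in>{1..8}.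
     C_L77 i j k = inonu_wigner {1, 2, 3} (structure_constants sl3_coords sl3_basis commutator) i j k)"
  unfolding atLeastAtMost_1_8_eq
  by (simp add: inonu_wigner_def structure_constants_def sl3_coords_def sl3_basis_def
      commutator_nth3 C_L77_def sc_table_def)

theorem proposition7:
  shows "is_contraction_of UNIV L72_L1 su3 commutator
       \<and> is_contraction_of UNIV L72_L1 su21 commutator
       \<and> is_contraction_of UNIV L77_L1 su21 commutator
       \<and> is_contraction_of UNIV L77_L1 sl3R commutator"
proof -
  note contraction = inonu_wigner_contraction_sc_bracket[OF _ bilinear_commutator _ commutator_swap]
  have S: "{1, 2, 3} \<subseteq> {1..8::nat}"
    by auto
  show ?thesis
    unfolding L72_L1_def L77_L1_def
    using contraction[OF dual_basis_su3 commutator_in_su3 S su3_basis_subalgebra L72_inonu_wigner_su3]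
      contraction[OF dual_basis_su21_L72 commutator_in_su21 S su21_basis_L72_subalgebra L72_inonu_wigner_su21]
      contraction[OF dual_basis_su21_L77 commutator_in_su21 S su21_basis_L77_subalgebra L77_inonu_wigner_su21]
      contraction[OF dual_basis_sl3R commutator_in_sl3R S sl3_basis_subalgebra L77_inonu_wigner_sl3R]
    by blast
qed

end
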